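(* Let $n$ be a positive integer, $\mathbb T=(S^1)^n$, and let $\mathbb T'\subset\mathbb T$ be a subtorus. Let $\sigma_s\in\Omega^k(\mathbb T)$, $s<0$, be a family of exact smooth $\mathbb T'$-invariant $k$-forms, and assume there is $\delta>0$ such that $\sigma_s=O(e^{s\delta})$. Then there exists a family $\gamma_s\in\Omega^{k-1}(\mathbb T)$ of smooth $\mathbb T'$-invariant forms such that $d\gamma_s=\sigma_s$ and $\gamma_s=O(e^{s\delta})$.
   Context: Here a family of differential forms on $\mathbb T$ parametrized by $s\in(-\infty,0)$ is said to be $O(e^{s\delta})$ if, when written in the standard angle coordinates $\varphi_1,\dots,\varphi_n$ of $\mathbb T$ (as $\sum_J c_J\,d\varphi_J$), its coefficient functions $c_J$ are $O(e^{s\delta})$ as functions on $(-\infty,0)\times\mathbb T$, i.e. bounded by $Ce^{s\delta}$ for some constant $C$. $\mathbb T'$-invariance refers to invariance under translation by elements of $\mathbb T'$. *)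

theory Defs
  imports "HOL-Analysis.Analysis"
begin

text \<open>The torus T = (S^1)^n is modelled as R^n modulo (2 pi Z)^n, with the
index type 'n (CARD('n) = n) and angle coordinates x $ i.  A function on T is a
function on R^n that is 2 pi periodic in each coordinate.\<close>

definition torus_periodic :: "(real^'n \<Rightarrow> real) \<Rightarrow> bool" where
  "torus_periodic f \<longleftrightarrow> (\<forall>i x. f (x + (2 * pi) *\<^sub>R axis i 1) = f x)"

definition pd :: "'n \<Rightarrow> (real^'n \<Rightarrow> real) \<Rightarrow> real^'n \<Rightarrow> real" where
  "pd i f x = frechet_derivative f (at x) (axis i 1)"

definition iter_pd :: "'n list \<Rightarrow> (real^'n \<Rightarrow> real) \<Rightarrow> real^'n \<Rightarrow> real" where
  "iter_pd is f = foldr pd is f"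

definition smooth_fun :: "(real^'n \<Rightarrow> real) \<Rightarrow> bool" where
  "smooth_fun f \<longleftrightarrow> (\<forall>is. iter_pd is f differentiable_on UNIV)"

text \<open>A differential form is given by its alternating coefficient family:
  omega = sum over increasing J of (omega J) d phi_J, extended alternatingly to all
  index lists of length k, and zero on lists of other length.\<close>
definition smooth_kform :: "nat \<Rightarrow> ('n list \<Rightarrow> real^'n \<Rightarrow> real) \<Rightarrow> bool" where
  "smooth_kform k \<omega> \<longleftrightarrow>
     (\<forall>is. length is \<noteq> k \<longrightarrow> \<omega> is = (\<lambda>x. 0)) \<and>
     (\<forall>is i j. i < j \<and> j < length is \<longrightarrow>
        \<omega> (is[i := is ! j, j := is ! i]) = (\<lambda>x. - \<omega> is x)) \<and>
     (\<forall>is. smooth_fun (\<omega> is) \<and> torus_periodic (\<omega> is))"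

definition ext_d :: "('n list \<Rightarrow> real^'n \<Rightarrow> real) \<Rightarrow> 'n list \<Rightarrow> real^'n \<Rightarrow> real" where
  "ext_d \<omega> is x = (\<Sum>j<length is. (-1) ^ j * pd (is ! j) (\<omega> (take j is @ drop (Suc j) is)) x)"

definition exact_kform :: "nat \<Rightarrow> ('n list \<Rightarrow> real^'n \<Rightarrow> real) \<Rightarrow> bool" where
  "exact_kform k \<sigma> \<longleftrightarrow> smooth_kform k \<sigma> \<and> 1 \<le> k \<and>
     (\<exists>\<beta>. smooth_kform (k - 1) \<beta> \<and> ext_d \<beta> = \<sigma>)"

text \<open>A subtorus T' of T corresponds to a rational linear subspace V of R^n
  (spanned by integer vectors); T' is the image of V in T, and translation by
  elements of T' is x \<mapsto> x + v with v in V.\<close>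
definition subtorus_subspace :: "(real^'n) set \<Rightarrow> bool" where
  "subtorus_subspace V \<longleftrightarrow> (\<exists>B. (\<forall>b\<in>B. \<forall>i. b $ i \<in> \<int>) \<and> V = span B)"

definition invariant_under :: "(real^'n) set \<Rightarrow> ('n list \<Rightarrow> real^'n \<Rightarrow> real) \<Rightarrow> bool" where
  "invariant_under V \<omega> \<longleftrightarrow> (\<forall>v\<in>V. \<forall>is x. \<omega> is (x + v) = \<omega> is x)"

definition family_bigO :: "real \<Rightarrow> (real \<Rightarrow> 'n list \<Rightarrow> real^'n \<Rightarrow> real) \<Rightarrow> bool" where
  "family_bigO \<delta> \<omega> \<longleftrightarrow> (\<exists>C. \<forall>s<0. \<forall>is x. \<bar>\<omega> s is x\<bar> \<le> C * exp (s * \<delta>))"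

end

(* For an angle coordinate i let A_i average a function over the i-th circle factor and let
   P_i g x = 1/(2 pi) * integral over [0, 2 pi] of t * g (x + t e_i).  Integration by parts gives
   P_i (pd i g) = g - A_i g for periodic g.  Since P_i and A_i commute with d, Cartan's formula
   turns this into d K_i + K_i d = id - A_i for K_i sigma = P_i (contraction of sigma with e_i).
   Composing over all coordinates yields an operator Q with d Q sigma = sigma - A sigma on closed
   forms, where A averages over the whole torus; for exact sigma = d beta we get
   A sigma = d (A beta) = 0 because A beta is constant.  Q is built from integrals with bounded
   kernels that commute with all translations, so Q sigma is smooth, inherits every translation
   invariance of sigma, and is bounded by 2 pi n sup |sigma|; then gamma_s = Q sigma_s. *)

theory Submission
  imports Defs
begin

subsection \<open>Partial derivatives and smooth functions\<close>

lemma pd_eq_if_has_derivative: "(f has_derivative f') (at x) \<Longrightarrow> pd i f x = f' (axis i 1)"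
  unfolding pd_def by (metis frechet_derivative_at)

lemma has_derivative_shift:
  "(f has_derivative f') (at (x + v)) \<Longrightarrow> ((\<lambda>y. f (y + v)) has_derivative f') (at x)"
  using diff_chain_at[of "\<lambda>y. y + v" "\<lambda>h. h" x f f']
  by (simp add: o_def has_derivative_add_const has_derivative_ident)

lemma pd_shift:
  assumes "f differentiable (at (x + v))"
  shows "pd i (\<lambda>y. f (y + v)) x = pd i f (x + v)"
  using pd_eq_if_has_derivative[OF has_derivative_shift[OF assms[unfolded frechet_derivative_works]]]
  by (simp add: pd_def)

lemma pd_const [simp]: "pd i (\<lambda>y. c) x = 0"
  using pd_eq_if_has_derivative[OF has_derivative_const[of c "at x"]] by simp

lemma pd_add:
  assumes "f differentiable (at x)" "g differentiable (at x)"
  shows "pd i (\<lambda>y. f y + g y) x = pd i f x + pd i g x"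
  using pd_eq_if_has_derivative[OF has_derivative_add[OF assms[unfolded frechet_derivative_works]]]
  by (simp add: pd_def)

lemma pd_diff:
  assumes "f differentiable (at x)" "g differentiable (at x)"
  shows "pd i (\<lambda>y. f y - g y) x = pd i f x - pd i g x"
  using pd_eq_if_has_derivative[OF has_derivative_diff[OF assms[unfolded frechet_derivative_works]]]
  by (simp add: pd_def)

lemma pd_sum:
  fixes F :: "'a \<Rightarrow> real^'n \<Rightarrow> real"
  assumes "finite A" "\<And>j. j \<in> A \<Longrightarrow> F j differentiable (at x)"
  shows "pd i (\<lambda>y. \<Sum>j\<in>A. c j * F j y) x = (\<Sum>j\<in>A. c j * pd i (F j) x)"
proof -
  have "((\<lambda>y. \<Sum>j\<in>A. c j * F j y) has_derivative
        (\<lambda>h. \<Sum>j\<in>A. c j * frechet_derivative (F j) (at x) h)) (at x)"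
    using assms by (intro has_derivative_sum has_derivative_mult_right)
       (simp add: frechet_derivative_works[symmetric])
  from pd_eq_if_has_derivative[OF this] show ?thesis by (simp add: pd_def)
qed

lemma frechet_derivative_eq_inner_pd:
  fixes g :: "real^'n \<Rightarrow> real"
  assumes "g differentiable (at y)"
  shows "frechet_derivative g (at y) h = h \<bullet> (\<chi> j. pd j g y)"
proof -
  let ?D = "frechet_derivative g (at y)"
  have "?D h = ?D (\<Sum>j\<in>UNIV. h $ j *\<^sub>R axis j 1)"
    using basis_expansion[of h] by (simp add: scalar_mult_eq_scaleR)
  also have "\<dots> = (\<Sum>j\<in>UNIV. h $ j * ?D (axis j 1))"
    using linear_frechet_derivative[OF assms] by (simp add: linear_sum linear_scale o_def)
  finally show ?thesis by (simp add: inner_vec_def pd_def)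
qed

lemma has_real_derivative_along_axis:
  assumes "g differentiable (at (x + t *\<^sub>R axis i 1))"
  shows "((\<lambda>t. g (x + t *\<^sub>R axis i 1)) has_real_derivative pd i g (x + t *\<^sub>R axis i 1)) (at t within S)"
proof -
  let ?D = "frechet_derivative g (at (x + t *\<^sub>R axis i 1))"
  have "((\<lambda>t. x + t *\<^sub>R axis i 1) has_derivative (\<lambda>s. s *\<^sub>R axis i 1)) (at t)"
    by (intro derivative_eq_intros) auto
  from diff_chain_at[OF this assms[unfolded frechet_derivative_works]]
  have "((\<lambda>t. g (x + t *\<^sub>R axis i 1)) has_derivative ?D \<circ> (\<lambda>s. s *\<^sub>R axis i 1)) (at t)"
    by (simp add: o_def)
  moreover have "?D \<circ> (\<lambda>s. s *\<^sub>R axis i 1) = (\<lambda>s. pd i g (x + t *\<^sub>R axis i 1) * s)"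
    using linear_frechet_derivative[OF assms] by (auto simp: o_def pd_def linear_scale)
  ultimately have "((\<lambda>t. g (x + t *\<^sub>R axis i 1)) has_real_derivative pd i g (x + t *\<^sub>R axis i 1)) (at t)"
    by (simp add: has_field_derivative_def)
  then show ?thesis
    by (rule has_field_derivative_at_within)
qed

lemma continuous_on_along_axis:
  fixes g :: "real^'n \<Rightarrow> real"
  assumes "continuous_on UNIV g"
  shows "continuous_on S (\<lambda>t. g (x + t *\<^sub>R axis i 1))"
  by (rule continuous_on_compose2[OF assms]) (auto intro!: continuous_intros)

lemma iter_pd_Nil [simp]: "iter_pd [] f = f"
  by (simp add: iter_pd_def)

lemma iter_pd_Cons [simp]: "iter_pd (i # is) f = pd i (iter_pd is f)"
  by (simp add: iter_pd_def)

lemma iter_pd_append: "iter_pd (is @ js) f = iter_pd is (iter_pd js f)"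
  by (simp add: iter_pd_def)

lemma smooth_fun_differentiable: "smooth_fun f \<Longrightarrow> f differentiable (at x)"
  unfolding smooth_fun_def differentiable_on_def by (metis iter_pd_Nil UNIV_I)

lemma smooth_fun_continuous: "smooth_fun f \<Longrightarrow> continuous_on UNIV f"
  by (simp add: smooth_fun_differentiable differentiable_imp_continuous_on differentiable_on_def)

lemma smooth_fun_pd: "smooth_fun f \<Longrightarrow> smooth_fun (pd i f)"
  unfolding smooth_fun_def by (metis iter_pd_append iter_pd_Cons iter_pd_Nil)

lemma smooth_funI_pd_closed:
  assumes "f \<in> S" "\<And>g x. g \<in> S \<Longrightarrow> g differentiable (at x)" "\<And>g i. g \<in> S \<Longrightarrow> pd i g \<in> S"
  shows "smooth_fun f"
proof -
  have "iter_pd is f \<in> S" for "is"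
    using assms(1,3) by (induction "is") auto
  then show ?thesis
    using assms(2) by (auto simp: smooth_fun_def differentiable_on_def)
qed

lemma smooth_fun_const: "smooth_fun (\<lambda>y. c)"
  by (rule smooth_funI_pd_closed[where S = "{\<lambda>y. c, \<lambda>y. 0}"]) auto

lemma smooth_fun_add:
  assumes "smooth_fun f" "smooth_fun g"
  shows "smooth_fun (\<lambda>y. f y + g y)"
proof (rule smooth_funI_pd_closed[where S = "{\<lambda>y. f y + g y | f g. smooth_fun f \<and> smooth_fun g}"])
  fix h x i assume "h \<in> {\<lambda>y. f y + g y | f g. smooth_fun f \<and> smooth_fun g}"
  then obtain f g where h: "h = (\<lambda>y. f y + g y)" and fg: "smooth_fun f" "smooth_fun g"
    by blast
  show "h differentiable (at x)"
    unfolding h using fg by (simp add: smooth_fun_differentiable differentiable_add)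
  have "pd i h = (\<lambda>y. pd i f y + pd i g y)"
    unfolding h using fg by (simp add: smooth_fun_differentiable pd_add fun_eq_iff)
  then show "pd i h \<in> {\<lambda>y. f y + g y | f g. smooth_fun f \<and> smooth_fun g}"
    using fg smooth_fun_pd by blast
qed (use assms in auto)

lemma smooth_fun_sum:
  assumes "finite A" "\<And>j. j \<in> A \<Longrightarrow> smooth_fun (F j)"
  shows "smooth_fun (\<lambda>y. \<Sum>j\<in>A. c j * F j y)"
proof (rule smooth_funI_pd_closed[where S = "{\<lambda>y. \<Sum>j\<in>A. c j * F j y | F. \<forall>j\<in>A. smooth_fun (F j)}"])
  fix h x i assume "h \<in> {\<lambda>y. \<Sum>j\<in>A. c j * F j y | F. \<forall>j\<in>A. smooth_fun (F j)}"
  then obtain F where h: "h = (\<lambda>y. \<Sum>j\<in>A. c j * F j y)" and F: "\<forall>j\<in>A. smooth_fun (F j)"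
    by blast
  have dF: "\<And>j x. j \<in> A \<Longrightarrow> F j differentiable (at x)"
    using F by (simp add: smooth_fun_differentiable)
  show "h differentiable (at x)"
    unfolding h by (rule differentiable_sum[OF assms(1)]) (simp add: dF)
  have "pd i h = (\<lambda>y. \<Sum>j\<in>A. c j * pd i (F j) y)"
    unfolding h by (rule ext, rule pd_sum[OF assms(1) dF])
  then show "pd i h \<in> {\<lambda>y. \<Sum>j\<in>A. c j * F j y | F. \<forall>j\<in>A. smooth_fun (F j)}"
    using F smooth_fun_pd by (intro CollectI exI[of _ "\<lambda>j. pd i (F j)"]) auto
qed (use assms in \<open>intro CollectI exI[of _ F]\<close>, auto)

subsection \<open>Translation invariance\<close>

definition shift_invariant :: "real^'n \<Rightarrow> (real^'n \<Rightarrow> real) \<Rightarrow> bool" where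
  "shift_invariant v f \<longleftrightarrow> (\<forall>x. f (x + v) = f x)"

lemma torus_periodic_iff_shift_invariant:
  "torus_periodic f \<longleftrightarrow> (\<forall>i. shift_invariant ((2 * pi) *\<^sub>R axis i 1) f)"
  unfolding torus_periodic_def shift_invariant_def by blast

lemma invariant_under_iff_shift_invariant:
  "invariant_under V \<omega> \<longleftrightarrow> (\<forall>v\<in>V. \<forall>is. shift_invariant v (\<omega> is))"
  unfolding invariant_under_def shift_invariant_def by blast

lemma shift_invariant_add:
  "shift_invariant v f \<Longrightarrow> shift_invariant v g \<Longrightarrow> shift_invariant v (\<lambda>x. f x + g x)"
  unfolding shift_invariant_def by simp

lemma shift_invariant_sum:
  "(\<And>j. j \<in> A \<Longrightarrow> shift_invariant v (F j)) \<Longrightarrow> shift_invariant v (\<lambda>x. \<Sum>j\<in>A. c j * F j x)"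
  unfolding shift_invariant_def by simp

lemma shift_invariant_pd:
  assumes "shift_invariant v f" "\<And>x. f differentiable (at x)"
  shows "shift_invariant v (pd i f)"
proof -
  have "(\<lambda>y. f (y + v)) = f"
    using assms(1) by (simp add: shift_invariant_def fun_eq_iff)
  then show ?thesis
    using pd_shift[OF assms(2), where v = v and i = i] by (simp add: shift_invariant_def)
qed

subsection \<open>Integration along coordinate lines\<close>

definition axis_integral :: "real \<Rightarrow> (real \<Rightarrow> real) \<Rightarrow> 'n \<Rightarrow> (real^'n \<Rightarrow> real) \<Rightarrow> real^'n \<Rightarrow> real"
  where "axis_integral T w i g x = integral {0..T} (\<lambda>t. w t * g (x + t *\<^sub>R axis i 1))"

lemma integrable_along_axis:
  fixes g :: "real^'n \<Rightarrow> real"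
  assumes "continuous_on {0..T} w" "continuous_on UNIV g"
  shows "(\<lambda>t. w t * g (x + t *\<^sub>R axis i 1)) integrable_on {0..T}"
  by (intro integrable_continuous_interval continuous_on_mult assms continuous_on_along_axis)

lemma axis_integral_pd_self:
  fixes g :: "real^'n \<Rightarrow> real"
  assumes "\<And>y. g differentiable (at y)" "0 \<le> T"
  shows "axis_integral T (\<lambda>_. 1) i (pd i g) x = g (x + T *\<^sub>R axis i 1) - g x"
proof -
  have "((\<lambda>t. pd i g (x + t *\<^sub>R axis i 1)) has_integral
      g (x + T *\<^sub>R axis i 1) - g (x + 0 *\<^sub>R axis i 1)) {0..T}"
    by (rule fundamental_theorem_of_calculus[OF assms(2)])
      (simp add: has_real_derivative_iff_has_vector_derivative[symmetric]
        has_real_derivative_along_axis assms(1))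
  then show ?thesis
    by (simp add: axis_integral_def integral_unique)
qed

lemma axis_integral_has_derivative:
  fixes g :: "real^'n \<Rightarrow> real"
  assumes w: "continuous_on {0..T} w"
    and g: "\<And>y. g differentiable (at y)" "\<And>j. continuous_on UNIV (pd j g)"
  shows "(axis_integral T w i g has_derivative
          (\<lambda>h. axis_integral T w i (\<lambda>y. frechet_derivative g (at y) h) x)) (at x)"
proof -
  \<comment> \<open>leibniz_rule wants the derivative as a continuous blinfun-valued map; the gradient provides it.\<close>
  define G where "G y = (\<chi> j. pd j g y)" for y
  define f where "f = (\<lambda>x t. w t * g (x + t *\<^sub>R axis i 1))"
  define f' where "f' = (\<lambda>x t. w t *\<^sub>R blinfun_inner_left (G (x + t *\<^sub>R axis i 1)))"
  have G: "frechet_derivative g (at y) h = h \<bullet> G y" for y h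
    unfolding G_def by (rule frechet_derivative_eq_inner_pd[OF g(1)])
  have "((\<lambda>x. f x t) has_derivative blinfun_apply (f' x t)) (at x within UNIV)" for x t
  proof -
    have "((\<lambda>x. w t * g (x + t *\<^sub>R axis i 1)) has_derivative
        (\<lambda>h. w t * frechet_derivative g (at (x + t *\<^sub>R axis i 1)) h)) (at x)"
      using g(1) by (intro has_derivative_mult_right has_derivative_shift)
        (simp add: frechet_derivative_works[symmetric])
    then show ?thesis
      by (simp add: f_def f'_def G inner_commute scaleR_blinfun.rep_eq)
  qed
  moreover have "f x integrable_on cbox 0 T" for x
    unfolding f_def cbox_interval
    by (intro integrable_along_axis w differentiable_imp_continuous_on)
      (simp add: differentiable_on_def g(1))
  moreover have cont_f': "continuous_on (UNIV \<times> cbox 0 T) (\<lambda>(x, t). f' x t)"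
  proof -
    have "continuous_on UNIV G"
      unfolding G_def by (intro continuous_on_vec_lambda g(2))
    then have "continuous_on (UNIV \<times> cbox 0 T) (\<lambda>p. G (fst p + snd p *\<^sub>R axis i 1))"
      by (rule continuous_on_compose2) (auto intro!: continuous_intros)
    moreover have "continuous_on (UNIV \<times> cbox 0 T) (\<lambda>p::(real^'n) \<times> real. w (snd p))"
      by (rule continuous_on_compose2[OF w[folded cbox_interval] continuous_on_snd]) auto
    ultimately show ?thesis
      unfolding f'_def split_def
      by (intro continuous_on_scaleR bounded_linear.continuous_on[OF bounded_linear_blinfun_inner_left])
  qed
  ultimately have "((\<lambda>x. integral (cbox 0 T) (f x)) has_derivative integral (cbox 0 T) (f' x)) (at x)"
    using leibniz_rule[of UNIV 0 T f f' x] by simp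
  moreover have "axis_integral T w i g = (\<lambda>x. integral (cbox 0 T) (f x))"
    by (simp add: fun_eq_iff axis_integral_def f_def cbox_interval)
  moreover have "continuous_on (cbox 0 T) (\<lambda>t. (\<lambda>(x, t). f' x t) (x, t))"
    by (rule continuous_on_compose2[OF cont_f']) (auto intro!: continuous_intros)
  then have "blinfun_apply (integral (cbox 0 T) (f' x)) =
      (\<lambda>h. axis_integral T w i (\<lambda>y. frechet_derivative g (at y) h) x)"
    by (simp add: fun_eq_iff blinfun_apply_integral integrable_continuous_interval axis_integral_def
        f'_def G scaleR_blinfun.rep_eq inner_commute cbox_interval)
  ultimately show ?thesis
    by simp
qed

lemma axis_integral_pd:
  fixes g :: "real^'n \<Rightarrow> real"
  assumes "continuous_on {0..T} w" "\<And>y. g differentiable (at y)" "\<And>j. continuous_on UNIV (pd j g)"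
  shows "pd j (axis_integral T w i g) x = axis_integral T w i (pd j g) x"
  using pd_eq_if_has_derivative[OF axis_integral_has_derivative[OF assms]]
  by (simp add: pd_def[abs_def])

lemma smooth_fun_axis_integral:
  assumes "continuous_on {0..T} w" "smooth_fun g"
  shows "smooth_fun (axis_integral T w i g)"
proof (rule smooth_funI_pd_closed[where S = "{axis_integral T w i g | g. smooth_fun g}"])
  fix h x j assume "h \<in> {axis_integral T w i g | g. smooth_fun g}"
  then obtain g where h: "h = axis_integral T w i g" and g: "smooth_fun g"
    by blast
  have C1: "\<And>y. g differentiable (at y)" "\<And>j. continuous_on UNIV (pd j g)"
    using g by (auto intro: smooth_fun_differentiable smooth_fun_continuous smooth_fun_pd)
  show "h differentiable (at x)"
    unfolding h using axis_integral_has_derivative[OF assms(1) C1] by (auto simp: differentiable_def)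
  have "pd j h = axis_integral T w i (pd j g)"
    unfolding h by (rule ext, rule axis_integral_pd[OF assms(1) C1])
  then show "pd j h \<in> {axis_integral T w i g | g. smooth_fun g}"
    using g smooth_fun_pd by blast
qed (use assms in blast)

lemma shift_invariant_axis_integral:
  assumes "shift_invariant v g"
  shows "shift_invariant v (axis_integral T w i g)"
proof -
  have "g (x + v + t *\<^sub>R axis i 1) = g (x + t *\<^sub>R axis i 1)" for x t
    using assms unfolding shift_invariant_def by (metis add.assoc add.commute)
  then show ?thesis
    by (simp add: shift_invariant_def axis_integral_def)
qed

lemma axis_integral_uminus: "axis_integral T w i (\<lambda>y. - g y) x = - axis_integral T w i g x"
  unfolding axis_integral_def by (simp only: mult_minus_right integral_neg)

lemma axis_integral_diff:
  fixes f g :: "real^'n \<Rightarrow> real"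
  assumes "continuous_on {0..T} w" "continuous_on UNIV f" "continuous_on UNIV g"
  shows "axis_integral T w i (\<lambda>y. f y - g y) x = axis_integral T w i f x - axis_integral T w i g x"
  using integral_diff[OF integrable_along_axis[OF assms(1,2)] integrable_along_axis[OF assms(1,3)]]
  by (simp add: axis_integral_def right_diff_distrib)

lemma axis_integral_sum:
  fixes F :: "'a \<Rightarrow> real^'n \<Rightarrow> real"
  assumes "continuous_on {0..T} w" "finite A" "\<And>j. j \<in> A \<Longrightarrow> continuous_on UNIV (F j)"
  shows "axis_integral T w i (\<lambda>y. \<Sum>j\<in>A. c j * F j y) x = (\<Sum>j\<in>A. c j * axis_integral T w i (F j) x)"
proof -
  have "(\<lambda>t. c j * (w t * F j (x + t *\<^sub>R axis i 1))) integrable_on {0..T}" if "j \<in> A" for j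
    using integrable_on_cmult_left[OF integrable_along_axis[OF assms(1) assms(3)[OF that]]] by simp
  then show ?thesis
    by (simp add: axis_integral_def integral_sum[OF assms(2)] sum_distrib_left mult.left_commute)
qed

lemma axis_integral_bound:
  fixes g :: "real^'n \<Rightarrow> real"
  assumes "0 \<le> T" "continuous_on {0..T} w" "continuous_on UNIV g"
    and "\<And>t. t \<in> {0..T} \<Longrightarrow> \<bar>w t\<bar> \<le> M" "\<And>y. \<bar>g y\<bar> \<le> B"
  shows "\<bar>axis_integral T w i g x\<bar> \<le> T * M * B"
proof -
  have "norm (axis_integral T w i g x) \<le> integral {0..T} (\<lambda>t. M * B)"
    unfolding axis_integral_def
  proof (rule integral_norm_bound_integral[OF integrable_along_axis[OF assms(2,3)]])
    fix t assume "t \<in> {0..T}"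
    then show "norm (w t * g (x + t *\<^sub>R axis i 1)) \<le> M * B"
      using assms(4,5) by (simp add: abs_mult mult_mono')
  qed (rule integrable_const_ivl)
  then show ?thesis
    using assms(1) by (simp add: mult_ac)
qed

(* Integrating either mixed partial along the b-axis over [0, T] gives
   pd a f (x + T e_b) - pd a f x; differentiating in T at 0 recovers both. *)
lemma pd_commute:
  fixes f :: "real^'n \<Rightarrow> real"
  assumes f: "smooth_fun f"
  shows "pd a (pd b f) x = pd b (pd a f) x"
proof -
  let ?I = "\<lambda>h T. axis_integral T (\<lambda>_. 1) b h x"
  have eq: "?I (pd a (pd b f)) T = ?I (pd b (pd a f)) T" if "0 \<le> T" for T
  proof -
    have "?I (pd a (pd b f)) T = pd a (axis_integral T (\<lambda>_. 1) b (pd b f)) x"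
      using f by (simp add: axis_integral_pd smooth_fun_differentiable smooth_fun_continuous smooth_fun_pd)
    also have "axis_integral T (\<lambda>_. 1) b (pd b f) = (\<lambda>y. f (y + T *\<^sub>R axis b 1) - f y)"
      using f that by (simp add: fun_eq_iff axis_integral_pd_self smooth_fun_differentiable)
    also have "pd a \<dots> x = pd a f (x + T *\<^sub>R axis b 1) - pd a f x"
    proof -
      have "(\<lambda>y. f (y + T *\<^sub>R axis b 1)) differentiable (at x)"
        using has_derivative_shift f by (metis differentiable_def smooth_fun_differentiable)
      then show ?thesis
        using f by (simp add: pd_diff pd_shift smooth_fun_differentiable)
    qed
    also have "\<dots> = ?I (pd b (pd a f)) T"
      using f that by (simp add: axis_integral_pd_self smooth_fun_differentiable smooth_fun_pd)
    finally show ?thesis .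
  qed
  have deriv: "((\<lambda>T. ?I h T) has_vector_derivative h x) (at 0 within {0..1})"
    if "smooth_fun h" for h
    using integral_has_vector_derivative[of 0 1 "\<lambda>t. h (x + t *\<^sub>R axis b 1)" 0]
      continuous_on_along_axis[OF smooth_fun_continuous[OF that]]
    by (simp add: axis_integral_def)
  have "((\<lambda>T. ?I (pd b (pd a f)) T) has_vector_derivative pd a (pd b f) x) (at 0 within {0..1})"
    by (rule has_vector_derivative_transform[where f = "?I (pd a (pd b f))"])
      (auto simp: eq intro: deriv smooth_fun_pd f)
  moreover have "((\<lambda>T. ?I (pd b (pd a f)) T) has_vector_derivative pd b (pd a f) x) (at 0 within {0..1})"
    by (intro deriv smooth_fun_pd f)
  ultimately show ?thesis
    using vector_derivative_unique_within_closed_interval[of 0 1 0] by (simp add: cbox_interval)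
qed

subsection \<open>The exterior derivative\<close>

(* Cartan's formula for the coordinate field e_a, whose Lie derivative is pd a;
   \<omega> (a # is) is the contraction of \<omega> with e_a. *)
lemma ext_d_Cons: "ext_d \<omega> (a # is) x = pd a (\<omega> is) x - ext_d (\<lambda>js. \<omega> (a # js)) is x"
proof -
  have "ext_d \<omega> (a # is) x = pd a (\<omega> is) x +
      (\<Sum>j<length is. (-1) ^ Suc j * pd (is ! j) (\<omega> (a # take j is @ drop (Suc j) is)) x)"
    unfolding ext_d_def by (simp only: length_Cons sum.lessThan_Suc_shift) simp
  then show ?thesis
    by (simp add: ext_d_def sum_negf[symmetric])
qed

lemma ext_d_add:
  assumes "\<And>is y. f is differentiable (at y)" "\<And>is y. g is differentiable (at y)"
  shows "ext_d (\<lambda>is y. f is y + g is y) is x = ext_d f is x + ext_d g is x"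
  by (simp add: ext_d_def pd_add assms distrib_left sum.distrib)

lemma ext_d_diff:
  assumes "\<And>is y. f is differentiable (at y)" "\<And>is y. g is differentiable (at y)"
  shows "ext_d (\<lambda>is y. f is y - g is y) is x = ext_d f is x - ext_d g is x"
  by (simp add: ext_d_def pd_diff assms right_diff_distrib sum_subtractf)

lemma smooth_fun_ext_d:
  assumes "\<And>is. smooth_fun (\<omega> is)"
  shows "smooth_fun (ext_d \<omega> is)"
  unfolding ext_d_def[abs_def]
  by (rule smooth_fun_sum[where F = "\<lambda>j. pd (is ! j) (\<omega> (take j is @ drop (Suc j) is))"])
    (simp_all add: assms smooth_fun_pd)

lemma shift_invariant_ext_d:
  assumes "\<And>is. smooth_fun (\<omega> is)" "\<And>is. shift_invariant v (\<omega> is)"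
  shows "shift_invariant v (ext_d \<omega> is)"
  unfolding ext_d_def[abs_def]
  by (rule shift_invariant_sum[where F = "\<lambda>j. pd (is ! j) (\<omega> (take j is @ drop (Suc j) is))"])
    (simp add: assms shift_invariant_pd smooth_fun_differentiable)

lemma pd_ext_d:
  assumes "\<And>is. smooth_fun (\<omega> is)"
  shows "pd a (ext_d \<omega> is) x = ext_d (\<lambda>js. pd a (\<omega> js)) is x"
proof -
  have "pd a (ext_d \<omega> is) x =
      (\<Sum>j<length is. (-1) ^ j * pd a (pd (is ! j) (\<omega> (take j is @ drop (Suc j) is))) x)"
    unfolding ext_d_def[abs_def]
    by (rule pd_sum[where F = "\<lambda>j. pd (is ! j) (\<omega> (take j is @ drop (Suc j) is))"])
      (simp_all add: assms smooth_fun_pd smooth_fun_differentiable)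
  then show ?thesis
    by (simp add: ext_d_def pd_commute[OF assms])
qed

lemma ext_d_ext_d:
  assumes "\<And>is. smooth_fun (\<omega> is)"
  shows "ext_d (ext_d \<omega>) is x = 0"
  using assms
proof (induction "is" arbitrary: \<omega> x)
  case Nil
  then show ?case
    by (simp add: ext_d_def)
next
  case (Cons a "is")
  have "(\<lambda>js. ext_d \<omega> (a # js)) = (\<lambda>js y. pd a (\<omega> js) y - ext_d (\<lambda>js. \<omega> (a # js)) js y)"
    by (simp add: ext_d_Cons fun_eq_iff)
  then have "ext_d (\<lambda>js. ext_d \<omega> (a # js)) is x =
      ext_d (\<lambda>js. pd a (\<omega> js)) is x - ext_d (ext_d (\<lambda>js. \<omega> (a # js))) is x"
    using Cons.prems
    by (simp add: ext_d_diff smooth_fun_differentiable smooth_fun_pd smooth_fun_ext_d)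
  moreover have "ext_d (ext_d (\<lambda>js. \<omega> (a # js))) is x = 0"
    using Cons.prems by (rule Cons.IH)
  ultimately show ?case
    using Cons.prems by (simp add: ext_d_Cons pd_ext_d)
qed

lemma axis_integral_ext_d:
  assumes w: "continuous_on {0..T} w" and \<omega>: "\<And>is. smooth_fun (\<omega> is)"
  shows "ext_d (\<lambda>js. axis_integral T w i (\<omega> js)) is x = axis_integral T w i (ext_d \<omega> is) x"
proof -
  have "ext_d (\<lambda>js. axis_integral T w i (\<omega> js)) is x =
      (\<Sum>j<length is. (-1) ^ j * axis_integral T w i (pd (is ! j) (\<omega> (take j is @ drop (Suc j) is))) x)"
    using \<omega> by (simp add: ext_d_def axis_integral_pd[OF w] smooth_fun_differentiable
        smooth_fun_continuous smooth_fun_pd)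
  also have "\<dots> = axis_integral T w i (ext_d \<omega> is) x"
    unfolding ext_d_def[abs_def]
    by (rule axis_integral_sum[OF w, symmetric]) (simp_all add: \<omega> smooth_fun_continuous smooth_fun_pd)
  finally show ?thesis .
qed

subsection \<open>Averages and primitives along the circle factors\<close>

definition fiber_average :: "'n \<Rightarrow> (real^'n \<Rightarrow> real) \<Rightarrow> real^'n \<Rightarrow> real"
  where "fiber_average i = axis_integral (2 * pi) (\<lambda>_. 1 / (2 * pi)) i"

definition fiber_primitive :: "'n \<Rightarrow> (real^'n \<Rightarrow> real) \<Rightarrow> real^'n \<Rightarrow> real"
  where "fiber_primitive i = axis_integral (2 * pi) (\<lambda>t. t / (2 * pi)) i"

lemma smooth_fun_fiber_average: "smooth_fun g \<Longrightarrow> smooth_fun (fiber_average i g)"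
  unfolding fiber_average_def by (rule smooth_fun_axis_integral) simp

lemma smooth_fun_fiber_primitive: "smooth_fun g \<Longrightarrow> smooth_fun (fiber_primitive i g)"
  unfolding fiber_primitive_def by (rule smooth_fun_axis_integral) (auto intro!: continuous_intros)

lemma fiber_average_diff:
  "continuous_on UNIV f \<Longrightarrow> continuous_on UNIV g \<Longrightarrow>
    fiber_average i (\<lambda>y. f y - g y) x = fiber_average i f x - fiber_average i g x"
  unfolding fiber_average_def by (rule axis_integral_diff) simp_all

lemma fiber_average_bound:
  assumes "continuous_on UNIV g" "\<And>y. \<bar>g y\<bar> \<le> B"
  shows "\<bar>fiber_average i g x\<bar> \<le> B"
  using axis_integral_bound[of "2 * pi" "\<lambda>_. 1 / (2 * pi)" g "1 / (2 * pi)" B i x] assms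
  by (simp add: fiber_average_def)

lemma fiber_primitive_bound:
  assumes "continuous_on UNIV g" "\<And>y. \<bar>g y\<bar> \<le> B"
  shows "\<bar>fiber_primitive i g x\<bar> \<le> 2 * pi * B"
  using axis_integral_bound[of "2 * pi" "\<lambda>t. t / (2 * pi)" g 1 B i x] assms
  by (simp add: fiber_primitive_def continuous_on_divide continuous_on_id)

lemma fiber_average_pd_self:
  fixes g :: "real^'n \<Rightarrow> real"
  assumes "\<And>y. g differentiable (at y)" "shift_invariant ((2 * pi) *\<^sub>R axis i 1) g"
  shows "fiber_average i (pd i g) x = 0"
  using axis_integral_pd_self[OF assms(1), of "2 * pi" i x] assms(2)
  by (simp add: fiber_average_def axis_integral_def shift_invariant_def)

(* Integration by parts: t * g (x + t e_i) has derivative t * pd i g + g along the line, and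
   periodicity turns the boundary term into 2 pi * g x. *)
lemma fiber_primitive_pd_self:
  fixes g :: "real^'n \<Rightarrow> real"
  assumes "\<And>y. g differentiable (at y)" "continuous_on UNIV (pd i g)"
    and "shift_invariant ((2 * pi) *\<^sub>R axis i 1) g"
  shows "fiber_primitive i (pd i g) x = g x - fiber_average i g x"
proof -
  let ?g = "\<lambda>t. g (x + t *\<^sub>R axis i 1)" and ?g' = "\<lambda>t. pd i g (x + t *\<^sub>R axis i 1)"
  have "((\<lambda>t. t * ?g t) has_real_derivative t * ?g' t + ?g t) (at t within {0..2 * pi})" for t
    using DERIV_mult'[OF DERIV_ident has_real_derivative_along_axis[OF assms(1)]] by simp
  then have "((\<lambda>t. t * ?g' t + ?g t) has_integral 2 * pi * ?g (2 * pi) - 0 * ?g 0) {0..2 * pi}"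
    by (intro fundamental_theorem_of_calculus)
      (auto simp: has_real_derivative_iff_has_vector_derivative[symmetric])
  moreover have "?g (2 * pi) = g x"
    using assms(3) by (simp add: shift_invariant_def)
  moreover have "(\<lambda>t. t * ?g' t) integrable_on {0..2 * pi}"
    by (intro integrable_continuous_interval continuous_on_mult continuous_on_id
        continuous_on_along_axis assms(2))
  moreover have "?g integrable_on {0..2 * pi}"
    using assms(1) by (intro integrable_continuous_interval continuous_on_along_axis
        differentiable_imp_continuous_on) (simp add: differentiable_on_def)
  ultimately have "integral {0..2 * pi} (\<lambda>t. t * ?g' t) + integral {0..2 * pi} ?g = 2 * pi * g x"
    by (simp add: integral_unique integral_add[symmetric])
  then show ?thesis
    by (simp add: fiber_primitive_def fiber_average_def axis_integral_def field_simps)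
qed

lemma ext_d_fiber_primitive:
  assumes "\<And>is. smooth_fun (\<sigma> is)" "\<And>is. torus_periodic (\<sigma> is)"
  shows "ext_d (\<lambda>js. fiber_primitive i (\<sigma> (i # js))) is x =
    \<sigma> is x - fiber_average i (\<sigma> is) x - fiber_primitive i (ext_d \<sigma> (i # is)) x"
proof -
  have "pd i (fiber_primitive i (\<sigma> is)) x = fiber_primitive i (pd i (\<sigma> is)) x"
    unfolding fiber_primitive_def
    by (rule axis_integral_pd) (auto intro!: continuous_intros smooth_fun_differentiable
        smooth_fun_continuous smooth_fun_pd assms(1))
  also have "\<dots> = \<sigma> is x - fiber_average i (\<sigma> is) x"
    using assms(2)[of "is"]
    by (intro fiber_primitive_pd_self smooth_fun_differentiable smooth_fun_continuous smooth_fun_pd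
        assms(1)) (simp add: torus_periodic_iff_shift_invariant)
  moreover have "ext_d (\<lambda>js. fiber_primitive i (\<sigma> js)) (i # is) x = fiber_primitive i (ext_d \<sigma> (i # is)) x"
    unfolding fiber_primitive_def
    by (rule axis_integral_ext_d[OF _ assms(1)]) (auto intro!: continuous_intros)
  ultimately show ?thesis
    by (simp add: ext_d_Cons)
qed

lemma smooth_fun_foldr_fiber_average: "smooth_fun g \<Longrightarrow> smooth_fun (foldr fiber_average L g)"
  by (induction L) (auto intro: smooth_fun_fiber_average)

lemma shift_invariant_foldr_fiber_average:
  "shift_invariant v g \<Longrightarrow> shift_invariant v (foldr fiber_average L g)"
  by (induction L) (auto simp: fiber_average_def intro: shift_invariant_axis_integral)

lemma foldr_fiber_average_ext_d:
  assumes "\<And>is. smooth_fun (\<beta> is)"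
  shows "foldr fiber_average L (ext_d \<beta> is) x = ext_d (\<lambda>js. foldr fiber_average L (\<beta> js)) is x"
proof (induction L arbitrary: x)
  case Nil
  then show ?case
    by simp
next
  case (Cons i L)
  have "foldr fiber_average L (ext_d \<beta> is) = ext_d (\<lambda>js. foldr fiber_average L (\<beta> js)) is"
    using Cons.IH by (rule ext)
  then have "foldr fiber_average (i # L) (ext_d \<beta> is) x =
      fiber_average i (ext_d (\<lambda>js. foldr fiber_average L (\<beta> js)) is) x"
    by simp
  also have "\<dots> = ext_d (\<lambda>js. foldr fiber_average (i # L) (\<beta> js)) is x"
    unfolding fiber_average_def foldr_Cons o_apply
    by (rule axis_integral_ext_d[symmetric])
      (simp_all add: assms smooth_fun_foldr_fiber_average flip: fiber_average_def)
  finally show ?case .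
qed

lemma pd_foldr_fiber_average:
  assumes "smooth_fun g" "torus_periodic g" "j \<in> set L"
  shows "pd j (foldr fiber_average L g) x = 0"
  using assms(3)
proof (induction L arbitrary: x)
  case Nil
  then show ?case
    by simp
next
  case (Cons i L)
  have smooth: "smooth_fun (foldr fiber_average L g)"
    using assms(1) by (rule smooth_fun_foldr_fiber_average)
  have "pd j (foldr fiber_average (i # L) g) x = fiber_average i (pd j (foldr fiber_average L g)) x"
    unfolding fiber_average_def foldr_Cons o_apply
    by (rule axis_integral_pd) (simp_all add: smooth smooth_fun_differentiable smooth_fun_continuous
        smooth_fun_pd flip: fiber_average_def)
  also have "\<dots> = 0"
  proof (cases "j = i")
    case True
    then show ?thesis
      using assms(2)
      by (simp add: fiber_average_pd_self smooth smooth_fun_differentiable smooth_fun_continuous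
          smooth_fun_pd shift_invariant_foldr_fiber_average torus_periodic_iff_shift_invariant)
  next
    case False
    then have "pd j (foldr fiber_average L g) = (\<lambda>_. 0)"
      using Cons by (simp add: fun_eq_iff)
    then show ?thesis
      by (simp add: fiber_average_def axis_integral_def)
  qed
  finally show ?case .
qed

subsection \<open>The homotopy operator\<close>

fun homotopy_operator :: "'n list \<Rightarrow> ('n list \<Rightarrow> real^'n \<Rightarrow> real) \<Rightarrow> 'n list \<Rightarrow> real^'n \<Rightarrow> real"
  where
    "homotopy_operator [] \<sigma> = (\<lambda>is x. 0)"
  | "homotopy_operator (i # L) \<sigma> =
      (\<lambda>is x. fiber_primitive i (\<sigma> (i # is)) x + fiber_average i (homotopy_operator L \<sigma> is) x)"

lemma smooth_fun_homotopy_operator: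
  "(\<And>is. smooth_fun (\<sigma> is)) \<Longrightarrow> smooth_fun (homotopy_operator L \<sigma> is)"
  by (induction L arbitrary: "is")
    (auto intro!: smooth_fun_const smooth_fun_add smooth_fun_fiber_primitive smooth_fun_fiber_average)

lemma shift_invariant_homotopy_operator:
  "(\<And>is. shift_invariant v (\<sigma> is)) \<Longrightarrow> shift_invariant v (homotopy_operator L \<sigma> is)"
  by (induction L arbitrary: "is")
    (auto intro!: shift_invariant_add shift_invariant_axis_integral
      simp: shift_invariant_def[of v "\<lambda>x. 0"] fiber_primitive_def fiber_average_def)

lemma smooth_kform_homotopy_operator:
  assumes "smooth_kform k \<sigma>" "1 \<le> k"
  shows "smooth_kform (k - 1) (homotopy_operator L \<sigma>)"
proof -
  have zero: "\<And>is. length is \<noteq> k \<Longrightarrow> \<sigma> is = (\<lambda>x. 0)"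
    and swap: "\<And>is i j. i < j \<Longrightarrow> j < length is \<Longrightarrow>
      \<sigma> (is[i := is ! j, j := is ! i]) = (\<lambda>x. - \<sigma> is x)"
    and smooth: "\<And>is. smooth_fun (\<sigma> is)" and periodic: "\<And>is. torus_periodic (\<sigma> is)"
    using assms(1) by (auto simp: smooth_kform_def)
  have "homotopy_operator L \<sigma> is = (\<lambda>x. 0)" if "length is \<noteq> k - 1" for "is"
  proof (induction L)
    case (Cons l L)
    have "\<sigma> (l # is) = (\<lambda>x. 0)"
      using that assms(2) by (intro zero) auto
    with Cons show ?case
      by (simp add: fiber_primitive_def fiber_average_def axis_integral_def)
  qed simp
  moreover have "homotopy_operator L \<sigma> (is[i := is ! j, j := is ! i]) = (\<lambda>x. - homotopy_operator L \<sigma> is x)"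
    if "i < j" "j < length is" for "is" i j
  proof (induction L)
    case (Cons l L)
    have "\<sigma> (l # is[i := is ! j, j := is ! i]) = (\<lambda>x. - \<sigma> (l # is) x)"
      using that swap[of "Suc i" "Suc j" "l # is"] by simp
    with Cons show ?case
      by (simp add: fiber_primitive_def fiber_average_def axis_integral_uminus)
  qed simp
  moreover have "torus_periodic (homotopy_operator L \<sigma> is)" for "is"
    using periodic by (simp add: torus_periodic_iff_shift_invariant shift_invariant_homotopy_operator)
  ultimately show ?thesis
    using smooth by (simp add: smooth_kform_def smooth_fun_homotopy_operator)
qed

lemma invariant_under_homotopy_operator:
  "invariant_under V \<sigma> \<Longrightarrow> invariant_under V (homotopy_operator L \<sigma>)"
  by (simp add: invariant_under_iff_shift_invariant shift_invariant_homotopy_operator)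

lemma homotopy_operator_bound:
  assumes "\<And>is. smooth_fun (\<sigma> is)" "\<And>is y. \<bar>\<sigma> is y\<bar> \<le> B"
  shows "\<bar>homotopy_operator L \<sigma> is x\<bar> \<le> length L * (2 * pi * B)"
proof (induction L arbitrary: "is" x)
  case Nil
  then show ?case
    by simp
next
  case (Cons i L)
  have "\<bar>fiber_primitive i (\<sigma> (i # is)) x\<bar> \<le> 2 * pi * B"
    using assms by (intro fiber_primitive_bound smooth_fun_continuous)
  moreover have "\<bar>fiber_average i (homotopy_operator L \<sigma> is) x\<bar> \<le> length L * (2 * pi * B)"
    using assms(1) Cons.IH
    by (intro fiber_average_bound smooth_fun_continuous smooth_fun_homotopy_operator)
  ultimately show ?case
    by (simp add: algebra_simps)
qed

lemma ext_d_homotopy_operator: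
  assumes "\<And>is. smooth_fun (\<sigma> is)" "\<And>is. torus_periodic (\<sigma> is)" "\<And>is x. ext_d \<sigma> is x = 0"
  shows "ext_d (homotopy_operator L \<sigma>) is x = \<sigma> is x - foldr fiber_average L (\<sigma> is) x"
proof (induction L arbitrary: "is" x)
  case Nil
  then show ?case
    by (simp add: ext_d_def)
next
  case (Cons i L)
  have IH:
    "ext_d (homotopy_operator L \<sigma>) is = (\<lambda>y. \<sigma> is y - foldr fiber_average L (\<sigma> is) y)"
    using Cons.IH by (simp add: fun_eq_iff)
  have "ext_d (homotopy_operator (i # L) \<sigma>) is x =
      ext_d (\<lambda>js. fiber_primitive i (\<sigma> (i # js))) is x +
      ext_d (\<lambda>js. fiber_average i (homotopy_operator L \<sigma> js)) is x"
    using assms(1) by (simp add: ext_d_add smooth_fun_differentiable smooth_fun_fiber_primitive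
        smooth_fun_fiber_average smooth_fun_homotopy_operator)
  also have "ext_d (\<lambda>js. fiber_average i (homotopy_operator L \<sigma> js)) is x =
      fiber_average i (ext_d (homotopy_operator L \<sigma>) is) x"
    unfolding fiber_average_def
    by (rule axis_integral_ext_d) (simp_all add: smooth_fun_homotopy_operator assms(1))
  also have "\<dots> = fiber_average i (\<sigma> is) x - foldr fiber_average (i # L) (\<sigma> is) x"
    unfolding IH
    by (simp add: fiber_average_diff smooth_fun_continuous smooth_fun_foldr_fiber_average assms(1))
  moreover have "fiber_primitive i (ext_d \<sigma> (i # is)) x = 0"
    using assms(3) by (simp add: fiber_primitive_def axis_integral_def)
  moreover have "ext_d (\<lambda>js. fiber_primitive i (\<sigma> (i # js))) is x =
      \<sigma> is x - fiber_average i (\<sigma> is) x - fiber_primitive i (ext_d \<sigma> (i # is)) x"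
    by (rule ext_d_fiber_primitive[OF assms(1,2)])
  ultimately show ?case
    by simp
qed

lemma ext_d_homotopy_operator_ext_d:
  assumes "set L = UNIV" "\<And>is. smooth_fun (\<beta> is)" "\<And>is. torus_periodic (\<beta> is)"
  shows "ext_d (homotopy_operator L (ext_d \<beta>)) = ext_d \<beta>"
proof (intro ext)
  fix "is" x
  have "ext_d (homotopy_operator L (ext_d \<beta>)) is x = ext_d \<beta> is x - foldr fiber_average L (ext_d \<beta> is) x"
    using assms(2,3)
    by (intro ext_d_homotopy_operator ext_d_ext_d smooth_fun_ext_d)
      (auto simp: torus_periodic_iff_shift_invariant intro: shift_invariant_ext_d)
  also have "foldr fiber_average L (ext_d \<beta> is) x = ext_d (\<lambda>js. foldr fiber_average L (\<beta> js)) is x"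
    using assms(2) by (rule foldr_fiber_average_ext_d)
  also have "\<dots> = 0"
    using assms by (simp add: ext_d_def pd_foldr_fiber_average)
  finally show "ext_d (homotopy_operator L (ext_d \<beta>)) is x = ext_d \<beta> is x"
    by simp
qed

theorem lemma5p11:
  fixes V :: "(real^'n) set" and k :: nat and \<delta> :: real
    and \<sigma> :: "real \<Rightarrow> 'n list \<Rightarrow> real^'n \<Rightarrow> real"
  assumes "subtorus_subspace V"
    and "1 \<le> k"
    and "\<And>s. s < 0 \<Longrightarrow> smooth_kform k (\<sigma> s) \<and> exact_kform k (\<sigma> s) \<and> invariant_under V (\<sigma> s)"
    and "\<delta> > 0"
    and "family_bigO \<delta> \<sigma>"
  shows "\<exists>\<gamma>. (\<forall>s<0. smooth_kform (k - 1) (\<gamma> s) \<and> invariant_under V (\<gamma> s)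
                  \<and> ext_d (\<gamma> s) = \<sigma> s)
            \<and> family_bigO \<delta> \<gamma>"
proof -
  obtain L :: "'n list" where L: "set L = UNIV"
    using finite_list[of "UNIV :: 'n set"] by auto
  obtain C where C: "\<forall>s<0. \<forall>is x. \<bar>\<sigma> s is x\<bar> \<le> C * exp (s * \<delta>)"
    using assms(5) unfolding family_bigO_def by blast
  define \<gamma> where "\<gamma> s = homotopy_operator L (\<sigma> s)" for s
  have "smooth_kform (k - 1) (\<gamma> s) \<and> invariant_under V (\<gamma> s) \<and> ext_d (\<gamma> s) = \<sigma> s" if s: "s < 0" for s
  proof -
    obtain \<beta> where "smooth_kform (k - 1) \<beta>" "ext_d \<beta> = \<sigma> s"
      using assms(3)[OF s] unfolding exact_kform_def by blast
    then have "ext_d (\<gamma> s) = \<sigma> s"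
      using ext_d_homotopy_operator_ext_d[OF L, of \<beta>] by (simp add: \<gamma>_def smooth_kform_def)
    then show ?thesis
      using assms(3)[OF s] smooth_kform_homotopy_operator[OF _ assms(2)] invariant_under_homotopy_operator
      unfolding \<gamma>_def by blast
  qed
  moreover have "\<bar>\<gamma> s is x\<bar> \<le> (length L * 2 * pi * C) * exp (s * \<delta>)" if "s < 0" for s "is" x
  proof -
    have "\<bar>\<gamma> s is x\<bar> \<le> length L * (2 * pi * (C * exp (s * \<delta>)))"
      unfolding \<gamma>_def using assms(3)[OF that] C that
      by (intro homotopy_operator_bound) (auto simp: smooth_kform_def)
    then show ?thesis
      by (simp add: algebra_simps)
  qed
  ultimately show ?thesis
    unfolding family_bigO_def by blast
qed

end
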